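(* Let $n\ge 2$, and suppose either $n=2$ and $p\geq 2$, or $n\geq 3$ and $p \geq \frac{2n}{n-1}$. Then \[ k_{n,p}(s) \geq \left(\frac{n-1}{n}\right)^p s^p \quad \text{for all } s \geq 0. \]
   Context: Define $\Phi:[0,\infty)\to[0,\infty)$ by $\Phi(t) = n\int_0^t (\sinh r)^{n-1}\,dr$; it is a strictly increasing diffeomorphism with $\Phi(0)=0$ and $\Phi(t)\to\infty$ as $t\to\infty$, with inverse $\Phi^{-1}$. Define $k_{n,p}(s) = \left(\sinh \Phi^{-1}(s)\right)^{p(n-1)} - s^{\frac{p(n-1)}{n}}$ for $s\geq 0$. *)

theory Defs
  imports "HOL-Analysis.Analysis"
begin

definition Phi :: "nat \<Rightarrow> real \<Rightarrow> real" where
  "Phi n t = real n * integral {0..t} (\<lambda>r. (sinh r) ^ (n - 1))"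

definition Phi_inv :: "nat \<Rightarrow> real \<Rightarrow> real" where
  "Phi_inv n = the_inv_into {0..} (Phi n)"

definition k_np :: "nat \<Rightarrow> real \<Rightarrow> real \<Rightarrow> real" where
  "k_np n p s = (sinh (Phi_inv n s)) powr (p * (real n - 1))
               - s powr (p * (real n - 1) / real n)"

end

theory Submission
  imports Defs
begin

(* Write s = Phi n t, S = sinh t and c = (n - 1) / n. Since u powr e + v powr e \<le> (u + v) powr e
   for e \<ge> 1, it suffices to prove the inequality with all three terms raised to the power q / p,
   for some 0 < q \<le> p: s powr (q (n - 1) / n) + (c s) powr q \<le> S powr (q (n - 1)).
   For n = 2 and q = 2 this is an identity, as Phi 2 t = 2 (cosh t - 1).
   For q = 2n / (n - 1) it reads s^2 + (c s) powr q \<le> S^(2n). Both sides vanish at t = 0,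
   and the derivative of the difference is 2n S^(n-1) (S^n cosh t - s - (c s) powr (q - 1)).
   The bracket vanishes at 0 as well, with derivative (n + 1) S^(n-1) (S^2 - (c s) powr (2 / (n - 1))),
   which is nonnegative because c s \<le> S^(n-1), a third comparison of derivatives. *)

lemma le_sinh_real: "0 \<le> x \<Longrightarrow> x \<le> sinh (x::real)"
  using real_le_x_sinh by (simp add: sinh_def exp_minus)

lemma Phi_0 [simp]: "Phi n 0 = 0"
  by (simp add: Phi_def)

lemma continuous_on_Phi: "continuous_on {0..T} (Phi n)"
  unfolding Phi_def
  by (intro continuous_intros indefinite_integral_continuous_1 integrable_continuous_real)

lemma Phi_has_real_derivative:
  assumes "x > 0"
  shows "(Phi n has_real_derivative real n * sinh x ^ (n - 1)) (at x)"
proof -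
  have "((\<lambda>x. integral {0..x} (\<lambda>r. sinh r ^ (n - 1))) has_real_derivative sinh x ^ (n - 1))
      (at x within {0..x+1})"
    using assms by (intro integral_has_real_derivative continuous_intros) auto
  moreover have "at x within {0..x+1} = at x"
    using assms by (intro at_within_interior) auto
  ultimately show ?thesis
    unfolding Phi_def[abs_def] by (auto intro: DERIV_cmult)
qed

lemma Phi_nonneg: "t \<ge> 0 \<Longrightarrow> Phi n t \<ge> 0"
  unfolding Phi_def
  by (intro mult_nonneg_nonneg integral_nonneg integrable_continuous_real continuous_intros) auto

lemma power_le_Phi:
  assumes "n \<ge> 1" "t \<ge> 0"
  shows "t ^ n \<le> Phi n t"
proof -
  have "(\<lambda>t. Phi n t - t ^ n) 0 \<le> (\<lambda>t. Phi n t - t ^ n) t"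
  proof (rule DERIV_nonneg_imp_increasing_open[OF assms(2)])
    fix x :: real assume x: "0 < x" "x < t"
    have "x ^ (n - 1) \<le> sinh x ^ (n - 1)"
      using x by (intro power_mono le_sinh_real) auto
    then show "\<exists>y. DERIV (\<lambda>t. Phi n t - t ^ n) x :> y \<and> y \<ge> 0"
      using x by (intro exI[of _ "real n * sinh x ^ (n - 1) - real n * x ^ (n - 1)"] conjI
          DERIV_diff Phi_has_real_derivative DERIV_pow) (auto intro: mult_left_mono)
  qed (intro continuous_intros continuous_on_Phi)
  then show ?thesis using assms(1) by (cases n) auto
qed

lemma Phi_strict_mono_on:
  assumes "n \<ge> 1"
  shows "strict_mono_on {0..} (Phi n)"
proof (rule strict_mono_onI)
  fix a b :: real assume a: "a \<in> {0..}" and "a < b"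
  show "Phi n a < Phi n b"
  proof (rule DERIV_pos_imp_increasing_open[OF \<open>a < b\<close>])
    fix x assume "a < x" "x < b"
    then show "\<exists>y. DERIV (Phi n) x :> y \<and> y > 0"
      using a assms
      by (intro exI[of _ "real n * sinh x ^ (n - 1)"] conjI Phi_has_real_derivative) auto
  next
    show "continuous_on {a..b} (Phi n)"
      using a by (auto intro: continuous_on_subset[OF continuous_on_Phi])
  qed
qed

lemma Phi_pos: "n \<ge> 1 \<Longrightarrow> t > 0 \<Longrightarrow> Phi n t > 0"
  using Phi_strict_mono_on[of n] by (auto dest: strict_mono_onD[of _ _ 0 t])

lemma nonneg_in_range_Phi:
  assumes "n \<ge> 1" "s \<ge> 0"
  shows "s \<in> Phi n ` {0..}"
proof -
  have "s \<le> (s + 1) ^ n"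
    using assms power_increasing[of 1 n "s + 1"] by simp
  also have "\<dots> \<le> Phi n (s + 1)"
    using assms by (intro power_le_Phi) auto
  finally obtain x where "0 \<le> x" "Phi n x = s"
    using IVT'[of "Phi n" 0 s "s + 1"] continuous_on_Phi assms by auto
  then show ?thesis by auto
qed

lemma
  assumes "n \<ge> 1" "s \<ge> 0"
  shows Phi_inv_nonneg: "Phi_inv n s \<ge> 0"
    and Phi_Phi_inv: "Phi n (Phi_inv n s) = s"
proof -
  have "inj_on (Phi n) {0..}"
    using assms by (intro strict_mono_on_imp_inj_on Phi_strict_mono_on)
  with nonneg_in_range_Phi[OF assms] show "Phi_inv n s \<ge> 0" "Phi n (Phi_inv n s) = s"
    unfolding Phi_inv_def
    by (auto intro: f_the_inv_into_f dest: the_inv_into_into[of _ _ _ "{0..}"])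
qed

lemma Phi_le_sinh_power:
  assumes "n \<ge> 2" "t \<ge> 0"
  shows "(real n - 1) * Phi n t \<le> real n * sinh t ^ (n - 1)"
proof -
  obtain m where n: "n = m + 2" using assms(1) by (metis add.commute le_Suc_ex)
  let ?f = "\<lambda>t. real n * sinh t ^ (n - 1) - (real n - 1) * Phi n t"
  have "?f 0 \<le> ?f t"
  proof (rule DERIV_nonneg_imp_increasing_open[OF assms(2)])
    fix x :: real assume x: "0 < x" "x < t"
    have D: "DERIV ?f x :> real n * (real (n - 1) * sinh x ^ (n - 2) * cosh x)
        - (real n - 1) * (real n * sinh x ^ (n - 1))" (is "DERIV ?f x :> ?D")
      by (rule derivative_eq_intros Phi_has_real_derivative[OF x(1)] refl)+ (simp add: n)
    have "?D = real n * (real n - 1) * sinh x ^ m * (cosh x - sinh x)"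
      by (simp add: n algebra_simps)
    also have "\<dots> \<ge> 0"
      using x sinh_le_cosh_real[of x] by (simp add: n)
    finally show "\<exists>y. DERIV ?f x :> y \<and> y \<ge> 0" using D by blast
  qed (intro continuous_intros continuous_on_Phi)
  then show ?thesis using assms by (simp add: n)
qed

lemma Phi_powr_le_sinh_square:
  assumes "n \<ge> 2" "t \<ge> 0"
  shows "((real n - 1) / real n * Phi n t) powr (2 / (real n - 1)) \<le> sinh t ^ 2"
proof -
  have e: "real (n - 1) * (2 / (real n - 1)) = 2"
    using assms(1) by (simp add: of_nat_diff field_simps)
  have "(real n - 1) / real n * Phi n t \<le> sinh t ^ (n - 1)"
    using Phi_le_sinh_power[OF assms] assms(1) by (simp add: field_simps)
  then have "((real n - 1) / real n * Phi n t) powr (2 / (real n - 1))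
      \<le> (sinh t ^ (n - 1)) powr (2 / (real n - 1))"
    using Phi_nonneg[OF assms(2)] assms by (intro powr_mono2) auto
  also have "sinh t ^ (n - 1) = sinh t powr real (n - 1)"
    using assms powr_realpow'[of "sinh t" "n - 1"] by simp
  also have "(sinh t powr real (n - 1)) powr (2 / (real n - 1)) = sinh t powr 2"
    unfolding powr_powr e ..
  also have "\<dots> = sinh t ^ 2"
    using assms(2) by simp
  finally show ?thesis .
qed

lemma continuous_on_Phi_powr:
  assumes "n \<ge> 1" "c > 0" "r > 0"
  shows "continuous_on {0..T} (\<lambda>t. (c * Phi n t) powr r)"
  using assms Phi_nonneg
  by (intro continuous_on_powr' continuous_intros continuous_on_Phi) auto

lemma Phi_powr_has_real_derivative:
  assumes "n \<ge> 1" "c > 0" "x > 0"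
  shows "((\<lambda>t. (c * Phi n t) powr r) has_real_derivative
    r * (c * Phi n x) powr (r - 1) * (c * (real n * sinh x ^ (n - 1)))) (at x)"
  using DERIV_fun_powr[where r = r, OF DERIV_cmult[OF Phi_has_real_derivative[OF assms(3)], of c]]
    Phi_pos[OF assms(1,3)] assms(2) by simp

lemma Phi_add_powr_le_sinh_power_cosh:
  assumes "n \<ge> 2" "t \<ge> 0"
  shows "Phi n t + ((real n - 1) / real n * Phi n t) powr ((real n + 1) / (real n - 1))
    \<le> sinh t ^ n * cosh t"
proof -
  define c where "c = (real n - 1) / real n"
  define r where "r = (real n + 1) / (real n - 1)"
  have c: "c > 0" and r: "r > 1" "r * c * real n = real n + 1" "r - 1 = 2 / (real n - 1)"
    using assms(1) by (auto simp: c_def r_def of_nat_diff field_simps)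
  let ?H = "\<lambda>t. sinh t ^ n * cosh t - Phi n t - (c * Phi n t) powr r"
  have "?H 0 \<le> ?H t"
  proof (rule DERIV_nonneg_imp_increasing_open[OF assms(2)])
    fix x :: real assume x: "0 < x" "x < t"
    define S Q where "S = sinh x" and "Q = c * Phi n x"
    have S: "S > 0" "S ^ n = S ^ (n - 1) * S" "cosh x * cosh x = S ^ 2 + 1"
      using x assms(1) cosh_square_eq[of x] power_minus_mult[of n S]
      by (auto simp: S_def power2_eq_square)
    have "DERIV (\<lambda>t. sinh t ^ n * cosh t) x
        :> real n * S ^ (n - 1) * cosh x * cosh x + S ^ n * S"
      by (rule derivative_eq_intros refl)+ (simp add: S_def algebra_simps)
    then have "DERIV ?H x :> real n * S ^ (n - 1) * cosh x * cosh x + S ^ n * S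
        - real n * S ^ (n - 1) - r * Q powr (r - 1) * (c * (real n * S ^ (n - 1)))"
      (is "DERIV ?H x :> ?D")
      unfolding S_def Q_def using assms(1) c x
      by (intro DERIV_diff Phi_has_real_derivative Phi_powr_has_real_derivative) auto
    moreover have "?D = (real n + 1) * S ^ (n - 1) * (S ^ 2 - Q powr (r - 1))"
    proof -
      have "?D = S ^ (n - 1) * (real n * (cosh x * cosh x) + S * S - real n
          - (r * c * real n) * Q powr (r - 1))"
        unfolding S(2) by (simp add: algebra_simps)
      then show ?thesis
        unfolding S(3) r(2) by (simp add: algebra_simps power2_eq_square)
    qed
    moreover have "Q powr (r - 1) \<le> S ^ 2"
      using Phi_powr_le_sinh_square[of n x] assms(1) x by (simp add: Q_def S_def c_def r(3))
    ultimately show "\<exists>y. DERIV ?H x :> y \<and> y \<ge> 0"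
      using S(1) by (intro exI[of _ ?D]) simp
  next
    have "continuous_on {0..t} (\<lambda>t. (c * Phi n t) powr r)"
      using c r(1) assms(1) by (intro continuous_on_Phi_powr) auto
    moreover have "continuous_on {0..t} (\<lambda>t. sinh t ^ n * cosh t - Phi n t)"
      by (intro continuous_intros continuous_on_Phi)
    ultimately show "continuous_on {0..t} ?H"
      by (rule continuous_on_diff[rotated])
  qed
  then show ?thesis
    using assms r(1) by (simp add: c_def r_def zero_power)
qed

lemma Phi_square_add_powr_le_sinh_power:
  assumes "n \<ge> 2" "t \<ge> 0"
  shows "Phi n t ^ 2 + ((real n - 1) / real n * Phi n t) powr (2 * real n / (real n - 1))
    \<le> sinh t ^ (2 * n)"
proof -
  define c where "c = (real n - 1) / real n"
  define q where "q = 2 * real n / (real n - 1)"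
  have c: "c > 0" and q: "q > 0" "q * c = 2" "q - 1 = (real n + 1) / (real n - 1)"
    using assms(1) by (auto simp: c_def q_def field_simps)
  let ?G = "\<lambda>t. sinh t ^ (2 * n) - Phi n t ^ 2 - (c * Phi n t) powr q"
  have "?G 0 \<le> ?G t"
  proof (rule DERIV_nonneg_imp_increasing_open[OF assms(2)])
    fix x :: real assume x: "0 < x" "x < t"
    define S Q where "S = sinh x" and "Q = c * Phi n x"
    have "2 * n - 1 = (n - 1) + n"
      using assms(1) by simp
    then have S: "S > 0" "S ^ (2 * n - 1) = S ^ (n - 1) * S ^ n"
      using x by (auto simp: S_def power_add[symmetric])
    have "DERIV (\<lambda>t. sinh t ^ (2 * n)) x :> real (2 * n) * S ^ (2 * n - 1) * cosh x"
      by (rule derivative_eq_intros refl)+ (simp add: S_def)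
    moreover have "DERIV (\<lambda>t. Phi n t ^ 2) x :> 2 * Phi n x * (real n * S ^ (n - 1))"
      using DERIV_power[where n = 2, OF Phi_has_real_derivative[OF x(1), of n]]
      by (simp add: S_def mult_ac)
    moreover have "DERIV (\<lambda>t. (c * Phi n t) powr q) x
        :> q * Q powr (q - 1) * (c * (real n * S ^ (n - 1)))"
      unfolding Q_def S_def using assms(1) c x by (intro Phi_powr_has_real_derivative) auto
    ultimately have "DERIV ?G x :> real (2 * n) * S ^ (2 * n - 1) * cosh x
        - 2 * Phi n x * (real n * S ^ (n - 1)) - q * Q powr (q - 1) * (c * (real n * S ^ (n - 1)))"
      (is "DERIV ?G x :> ?D")
      by (intro DERIV_diff)
    moreover have "?D = 2 * real n * S ^ (n - 1) * (S ^ n * cosh x - Phi n x - Q powr (q - 1))"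
    proof -
      have "?D = S ^ (n - 1) * (2 * real n * S ^ n * cosh x - 2 * real n * Phi n x
          - (q * c) * real n * Q powr (q - 1))"
        unfolding S(2) by (simp add: algebra_simps)
      then show ?thesis
        unfolding q(2) by (simp add: algebra_simps)
    qed
    moreover have "S ^ n * cosh x - Phi n x - Q powr (q - 1) \<ge> 0"
      using Phi_add_powr_le_sinh_power_cosh[of n x] assms(1) x
      by (simp add: S_def Q_def c_def q(3))
    ultimately show "\<exists>y. DERIV ?G x :> y \<and> y \<ge> 0"
      using S(1) by (intro exI[of _ ?D]) simp
  next
    have "continuous_on {0..t} (\<lambda>t. (c * Phi n t) powr q)"
      using c q(1) assms(1) by (intro continuous_on_Phi_powr) auto
    moreover have "continuous_on {0..t} (\<lambda>t. sinh t ^ (2 * n) - Phi n t ^ 2)"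
      by (intro continuous_intros continuous_on_Phi)
    ultimately show "continuous_on {0..t} ?G"
      by (rule continuous_on_diff[rotated])
  qed
  then show ?thesis
    using assms q(1) by (simp add: c_def q_def zero_power)
qed

lemma Phi_2:
  assumes "t \<ge> 0"
  shows "Phi 2 t = 2 * (cosh t - 1)"
proof -
  have "((\<lambda>r. sinh r ^ (2 - 1)) has_integral (cosh t - cosh 0)) {0..t}"
    using assms by (intro fundamental_theorem_of_calculus)
      (auto intro!: derivative_eq_intros
        simp: has_real_derivative_iff_has_vector_derivative[symmetric])
  then show ?thesis
    unfolding Phi_def by (simp add: integral_unique)
qed

lemma add_powr_le_powr_add:
  fixes u v e :: real
  assumes "u \<ge> 0" "v \<ge> 0" "e \<ge> 1"
  shows "u powr e + v powr e \<le> (u + v) powr e"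
proof (cases "u + v = 0")
  case True
  then have "u = 0" "v = 0"
    using assms by auto
  then show ?thesis by simp
next
  case False
  define w where "w = u + v"
  have w: "w > 0" using False assms by (simp add: w_def)
  have "u powr e + v powr e = w powr e * ((u / w) powr e + (v / w) powr e)"
    using w assms by (simp add: powr_divide algebra_simps)
  also have "\<dots> \<le> w powr e * (u / w + v / w)"
    using powr_mono'[of 1 e "u / w"] powr_mono'[of 1 e "v / w"] assms w
    by (intro mult_left_mono add_mono) (auto simp: w_def)
  also have "\<dots> = (u + v) powr e"
    using w by (simp add: w_def add_divide_distrib[symmetric])
  finally show ?thesis .
qed

lemma powr_add_le_powr_exponent_mono:
  fixes a b c p q :: real
  assumes "a \<ge> 0" "b \<ge> 0" "c \<ge> 0" "0 < q" "q \<le> p"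
    and "a powr q + b powr q \<le> c powr q"
  shows "a powr p + b powr p \<le> c powr p"
proof -
  have e: "p / q \<ge> 1" and p: "p = q * (p / q)"
    using assms(4,5) by auto
  have "a powr p + b powr p = (a powr q) powr (p / q) + (b powr q) powr (p / q)"
    by (subst (1 2) p) (simp add: powr_powr)
  also have "\<dots> \<le> (a powr q + b powr q) powr (p / q)"
    using e by (intro add_powr_le_powr_add) auto
  also have "\<dots> \<le> (c powr q) powr (p / q)"
    using assms(6) e by (intro powr_mono2) auto
  also have "\<dots> = c powr p"
    by (subst (2) p) (simp add: powr_powr)
  finally show ?thesis .
qed

lemma Phi_powr_add_le_sinh_powr_for_some_exponent:
  assumes "n \<ge> 2" and "(n = 2 \<and> p \<ge> 2) \<or> (n \<ge> 3 \<and> p \<ge> 2 * real n / (real n - 1))"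
    and "t \<ge> 0"
  obtains q where "0 < q" "q \<le> p"
    "(Phi n t powr ((real n - 1) / real n)) powr q + ((real n - 1) / real n * Phi n t) powr q
      \<le> (sinh t powr (real n - 1)) powr q"
proof (cases "n = 2")
  case True
  have "(Phi 2 t powr (1 / 2)) powr 2 + (Phi 2 t / 2) powr 2 = sinh t ^ 2"
    using assms(3) Phi_nonneg[of t 2] sinh_square_eq[of t]
    by (simp add: powr_powr Phi_2 power2_eq_square field_simps)
  moreover have "(sinh t powr 1) powr 2 = sinh t ^ 2"
    using assms(3) by simp
  ultimately show ?thesis
    using that[of 2] True assms(2) by simp
next
  case False
  define q where "q = 2 * real n / (real n - 1)"
  have n: "n \<ge> 3" "p \<ge> q" and q: "q > 0"
    using False assms(1,2) by (auto simp: q_def)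
  have "(real n - 1) / real n * q = 2"
    using n(1) by (simp add: q_def field_simps)
  then have "(Phi n t powr ((real n - 1) / real n)) powr q = Phi n t ^ 2"
    using Phi_nonneg[OF assms(3), of n] by (simp add: powr_powr)
  moreover have "(sinh t powr (real n - 1)) powr q = sinh t ^ (2 * n)"
    using n(1) assms(3) powr_realpow'[of "sinh t" "2 * n"] by (simp add: powr_powr q_def)
  ultimately show ?thesis
    using that[of q] n q Phi_square_add_powr_le_sinh_power[OF assms(1,3)] by (simp add: q_def)
qed

theorem lemma2p1:
  fixes n :: nat and p s :: real
  assumes "n \<ge> 2"
    and "(n = 2 \<and> p \<ge> 2) \<or> (n \<ge> 3 \<and> p \<ge> 2 * real n / (real n - 1))"
    and "s \<ge> 0"
  shows "k_np n p s \<ge> ((real n - 1) / real n) powr p * s powr p"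
proof -
  define t where "t = Phi_inv n s"
  have t: "t \<ge> 0" and s: "Phi n t = s"
    using assms(1,3) by (auto simp: t_def Phi_inv_nonneg Phi_Phi_inv)
  obtain q where q: "0 < q" "q \<le> p"
    "(s powr ((real n - 1) / real n)) powr q + ((real n - 1) / real n * s) powr q
      \<le> (sinh t powr (real n - 1)) powr q"
    using Phi_powr_add_le_sinh_powr_for_some_exponent[OF assms(1,2) t] unfolding s .
  have "(s powr ((real n - 1) / real n)) powr p + ((real n - 1) / real n * s) powr p
      \<le> (sinh t powr (real n - 1)) powr p"
    using assms(1,3) t by (intro powr_add_le_powr_exponent_mono[OF _ _ _ q]) auto
  moreover have "((real n - 1) / real n * s) powr p = ((real n - 1) / real n) powr p * s powr p"
    using assms(1,3) by (intro powr_mult)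
  ultimately show ?thesis
    by (simp add: k_np_def t_def powr_powr mult_ac)
qed

end
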